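(* Let $b\ge2$, $t\ge1$ and $n\ge(t+1)b-1$. Then \[ N^-_{2,b}(n,t)=D_{2,b}(n,t)-D_{2,b}(n-b,t)+D_{2,b}(n-3b,t-2)=D_{2,b}(n,t)-\binom{n-(t+1)b+1}{t}, \] where $D_{2,b}(n,t)=\sum_{i=0}^{t}\binom{n-bt}{i}$.
   Context: $\Sigma_2=\{0,1\}$. A $b$-burst-deletion at position $i\in[1,n-b+1]$ transforms $x_1\cdots x_n$ into $x_1\cdots x_{i-1}x_{i+b}\cdots x_n$. For $n\ge tb+1$, $t\ge0$, $\mathcal{D}_{t,b}(\boldsymbol{x})$ is the set of all length-$(n-tb)$ sequences obtainable from $\boldsymbol{x}$ by $t$ successive $b$-burst-deletions ($\mathcal{D}_{0,b}(\boldsymbol{x})=\{\boldsymbol{x}\}$). For $m\ge bs+1$, $s\ge0$: $D_{2,b}(m,s)=\max\{|\mathcal{D}_{s,b}(\boldsymbol{x})|:\boldsymbol{x}\in\Sigma_2^m\}$; conventions $D_{2,b}(m,s)=1$ if $m=bs\ge0$, and $D_{2,b}(m,s)=0$ if $m<bs$ or $s<0$. $N^-_{2,b}(n,t)=\max\{|\mathcal{D}_{t,b}(\boldsymbol{x})\cap\mathcal{D}_{t,b}(\boldsymbol{y})|:\boldsymbol{x}\ne\boldsymbol{y}\in\Sigma_2^n\}$. Convention: $\binom{m}{i}=0$ if $m<i$. *)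

theory Defs
  imports Main
begin

text \<open>Binary sequences are lists over bool (Sigma_2 = {0,1} identified with {False,True}).
  A b-burst-deletion removes b consecutive symbols; position i (0-indexed here) ranges
  over 0 .. length y - b, i.e. 1-indexed positions 1 .. n-b+1.\<close>

definition burst_del :: "nat \<Rightarrow> 'a list \<Rightarrow> 'a list set" where
  "burst_del b y = {take i y @ drop (i + b) y | i. i + b \<le> length y}"

fun burst_dels :: "nat \<Rightarrow> nat \<Rightarrow> 'a list \<Rightarrow> 'a list set" where
  "burst_dels b 0 x = {x}"
| "burst_dels b (Suc t) x = (\<Union>y \<in> burst_dels b t x. burst_del b y)"

text \<open>D_{2,b}(m,s), with integer arguments to accommodate the conventions
  (value 1 if m = bs >= 0, value 0 if m < bs or s < 0).\<close>
definition Dmax :: "nat \<Rightarrow> int \<Rightarrow> int \<Rightarrow> nat" where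
  "Dmax b m s =
     (if s < 0 \<or> m < int b * s then 0
      else if m = int b * s then 1
      else Max {card (burst_dels b (nat s) x) | x :: bool list. length x = nat m})"

definition Nminus :: "nat \<Rightarrow> nat \<Rightarrow> nat \<Rightarrow> nat" where
  "Nminus b n t = Max {card (burst_dels b t x \<inter> burst_dels b t y) | x y :: bool list.
      length x = n \<and> length y = n \<and> x \<noteq> y}"

end

(* Split the results of t burst deletions from x = a # x' by their first symbol: those starting
   with a are exactly the results from x', while those starting with the other symbol can be
   obtained by deleting the first b symbols first, so they are results of t - 1 deletions from
   drop b x'.  Induction on the length gives |D_t(x)| <= sum_{i <= t} C(n - bt, i), with equality
   for the antiperiodic word 0^b 1^b 0^b ...  The same splitting, applied to two distinct words
   at once, bounds the intersection by that sum minus C(n - (t + 1) b + 1, t), and the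
   antiperiodic word together with its copy with the b-th symbol flipped attains this bound. *)

theory Submission
  imports Defs
begin

lemma length_burst_del: "w \<in> burst_del b x \<Longrightarrow> length w + b = length x"
  by (auto simp: burst_del_def)

lemma length_burst_dels: "z \<in> burst_dels b t x \<Longrightarrow> length z + b * t = length x"
proof (induction t arbitrary: z)
  case (Suc t)
  then obtain y where "y \<in> burst_dels b t x" "z \<in> burst_del b y"
    by auto
  with Suc.IH length_burst_del show ?case
    by fastforce
qed simp

lemma finite_burst_del: "finite (burst_del b y)"
proof (rule finite_subset)
  show "burst_del b y \<subseteq> (\<lambda>i. take i y @ drop (i + b) y) ` {..length y}"
    unfolding burst_del_def by auto
qed simp

lemma finite_burst_dels: "finite (burst_dels b t x)"
  by (induction t) (auto simp: finite_burst_del)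

lemma drop_in_burst_del: "b \<le> length x \<Longrightarrow> drop b x \<in> burst_del b x"
  unfolding burst_del_def by (auto intro: exI[of _ 0])

lemma burst_dels_Suc_first: "burst_dels b (Suc t) x = (\<Union>y \<in> burst_del b x. burst_dels b t y)"
  by (induction t) auto

lemma burst_dels_drop:
  "b \<le> length x \<Longrightarrow> z \<in> burst_dels b t (drop b x) \<Longrightarrow> z \<in> burst_dels b (Suc t) x"
  unfolding burst_dels_Suc_first using drop_in_burst_del by blast

lemma burst_dels_full: "b * t = length x \<Longrightarrow> burst_dels b t x = {[]}"
proof (induction t arbitrary: x)
  case (Suc t)
  have "burst_dels b t y = {[]}" if "y \<in> burst_del b x" for y
    using that Suc by (intro Suc.IH) (auto simp: burst_del_def)
  moreover have "burst_del b x \<noteq> {}"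
    using drop_in_burst_del[of b x] Suc.prems by auto
  ultimately show ?case
    unfolding burst_dels_Suc_first by auto
qed simp

lemma Cons_burst_dels: "z \<in> burst_dels b t x \<Longrightarrow> a # z \<in> burst_dels b t (a # x)"
proof (induction t arbitrary: z)
  case (Suc t)
  then obtain y i where y: "y \<in> burst_dels b t x" "z = take i y @ drop (i + b) y" "i + b \<le> length y"
    by (auto simp: burst_del_def)
  then have "a # z \<in> burst_del b (a # y)"
    unfolding burst_del_def by (auto intro!: exI[of _ "Suc i"])
  with Suc.IH[OF y(1)] show ?case by auto
qed simp

lemma drop_burst_del:
  assumes "w \<in> burst_del b x" "k + b \<le> length x"
  shows "drop k w \<in> burst_del b (drop k x)"
proof -
  obtain j where w: "w = take j x @ drop (j + b) x" "j + b \<le> length x"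
    using assms(1) by (auto simp: burst_del_def)
  show ?thesis
  proof (cases "k \<le> j")
    case True
    then have "drop k w = take (j - k) (drop k x) @ drop (j - k + b) (drop k x)"
      using w by (simp add: drop_take)
    with True w show ?thesis
      unfolding burst_del_def by force
  next
    case False
    then have "drop k w = drop b (drop k x)"
      using w by (simp add: add.commute)
    moreover have "drop b (drop k x) \<in> burst_del b (drop k x)"
      using assms(2) by (intro drop_in_burst_del) simp
    ultimately show ?thesis by (simp only:)
  qed
qed

lemma burst_del_Cons_cases:
  assumes "y \<in> burst_del b (a # x)"
  shows "(\<exists>w. y = a # w \<and> w \<in> burst_del b x) \<or> y = drop b (a # x)"
proof -
  obtain i where i: "y = take i (a # x) @ drop (i + b) (a # x)" "i + b \<le> Suc (length x)"
    using assms by (auto simp: burst_del_def)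
  show ?thesis
  proof (cases i)
    case (Suc j)
    with i have "y = a # (take j x @ drop (j + b) x)" "j + b \<le> length x"
      by simp_all
    then show ?thesis
      unfolding burst_del_def by blast
  qed (use i in simp)
qed

text \<open>If the first symbol does not survive, the deletions can be reordered so that the first
  burst starts at the first position.\<close>

lemma burst_dels_Suc_Cons_cases:
  assumes "0 < b" "z \<in> burst_dels b (Suc t) (a # x)"
  shows "(\<exists>z'. z = a # z' \<and> z' \<in> burst_dels b (Suc t) x) \<or> z \<in> burst_dels b t (drop b (a # x))"
  using assms(2)
proof (induction t arbitrary: x z)
  case 0
  then show ?case
    using burst_del_Cons_cases[of z b a x] by auto
next
  case (Suc t)
  then obtain y where y: "y \<in> burst_del b (a # x)" "z \<in> burst_dels b (Suc t) y"
    unfolding burst_dels_Suc_first[of b "Suc t"] by blast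
  from burst_del_Cons_cases[OF y(1)] show ?case
  proof (elim disjE exE conjE)
    fix w assume yw: "y = a # w" and w: "w \<in> burst_del b x"
    from Suc.IH y(2) yw
    have "(\<exists>z'. z = a # z' \<and> z' \<in> burst_dels b (Suc t) w) \<or> z \<in> burst_dels b t (drop b (a # w))"
      by simp
    then show ?thesis
    proof (elim disjE exE conjE)
      fix z' assume "z = a # z'" "z' \<in> burst_dels b (Suc t) w"
      with w show ?thesis
        unfolding burst_dels_Suc_first[of b "Suc t" x] by blast
    next
      assume z: "z \<in> burst_dels b t (drop b (a # w))"
      have "b - 1 + b \<le> length x"
        using length_burst_dels[OF y(2)] length_burst_del[OF w] yw by simp
      with w have "drop (b - 1) w \<in> burst_del b (drop (b - 1) x)"
        by (rule drop_burst_del)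
      moreover have "drop b (a # w) = drop (b - 1) w" "drop b (a # x) = drop (b - 1) x"
        using assms(1) by (simp_all add: drop_Cons')
      ultimately show ?thesis
        using z unfolding burst_dels_Suc_first by auto
    qed
  qed (use y in simp)
qed

lemma burst_dels_tl:
  assumes "0 < b" "a # z \<in> burst_dels b t x"
  shows "z \<in> burst_dels b t (tl x)"
  using assms(2)
proof (induction t arbitrary: x z)
  case (Suc t)
  obtain c x' where x: "x = c # x'"
    using length_burst_dels[OF Suc.prems] by (cases x) auto
  from burst_dels_Suc_Cons_cases[OF assms(1) Suc.prems[unfolded x]] show ?case
  proof (elim disjE exE conjE)
    assume "a # z \<in> burst_dels b t (drop b (c # x'))"
    then have "z \<in> burst_dels b t (tl (drop b (c # x')))"
      by (rule Suc.IH)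
    moreover have "tl (drop b (c # x')) = drop b x'"
      using assms(1) by (cases b) (simp_all add: drop_Suc drop_tl)
    ultimately have "z \<in> burst_dels b t (drop b x')" by simp
    moreover have "b \<le> length x'"
      using length_burst_dels[OF \<open>a # z \<in> burst_dels b t (drop b (c # x'))\<close>] by simp
    ultimately show ?thesis
      using burst_dels_drop x by simp
  qed (use x in simp)
qed auto

section \<open>Splitting by the first symbol\<close>

definition head_dels :: "nat \<Rightarrow> 'a \<Rightarrow> nat \<Rightarrow> 'a list \<Rightarrow> 'a list set" where
  "head_dels b c t x = {z. c # z \<in> burst_dels b t x}"

lemma finite_head_dels: "finite (head_dels b c t x)"
proof -
  have "head_dels b c t x = Cons c -` burst_dels b t x"
    unfolding head_dels_def by auto
  moreover have "finite (Cons c -` burst_dels b t x)"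
    by (rule finite_vimageI[OF finite_burst_dels]) simp
  ultimately show ?thesis by simp
qed

lemma head_dels_subset: "0 < b \<Longrightarrow> head_dels b c t x \<subseteq> burst_dels b t (tl x)"
  unfolding head_dels_def by (auto intro: burst_dels_tl)

lemma head_dels_same: "0 < b \<Longrightarrow> head_dels b a t (a # x) = burst_dels b t x"
  using head_dels_subset[of b a t "a # x"] by (auto simp: head_dels_def intro: Cons_burst_dels)

lemma head_dels_other:
  assumes "0 < b" "c \<noteq> a"
  shows "head_dels b c (Suc t) (a # x) = head_dels b c t (drop b (a # x))"
proof
  show "head_dels b c (Suc t) (a # x) \<subseteq> head_dels b c t (drop b (a # x))"
  proof
    fix z assume "z \<in> head_dels b c (Suc t) (a # x)"
    then have "c # z \<in> burst_dels b (Suc t) (a # x)"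
      by (simp add: head_dels_def)
    with burst_dels_Suc_Cons_cases[OF assms(1) this] assms(2)
    show "z \<in> head_dels b c t (drop b (a # x))"
      by (auto simp: head_dels_def)
  qed
  show "head_dels b c t (drop b (a # x)) \<subseteq> head_dels b c (Suc t) (a # x)"
  proof
    fix z assume "z \<in> head_dels b c t (drop b (a # x))"
    then have z: "c # z \<in> burst_dels b t (drop b (a # x))"
      by (simp add: head_dels_def)
    have "b \<le> length (a # x)"
      using length_burst_dels[OF z] by simp
    then show "z \<in> head_dels b c (Suc t) (a # x)"
      unfolding head_dels_def mem_Collect_eq using z by (rule burst_dels_drop)
  qed
qed

lemma head_dels_other_subset:
  "0 < b \<Longrightarrow> c \<noteq> a \<Longrightarrow> head_dels b c (Suc t) (a # x) \<subseteq> burst_dels b t (drop b x)"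
  using head_dels_other[of b c a t x] head_dels_subset[of b c t "drop b (a # x)"]
  by (cases b) (simp_all add: drop_Suc drop_tl)

lemma head_dels_other_Cons_nth:
  assumes "0 < b" "c \<noteq> a" "b \<le> length x"
  shows "head_dels b c (Suc t) (a # x) = head_dels b c t ((a # x) ! b # drop b x)"
  using head_dels_other[OF assms(1,2)] Cons_nth_drop_Suc[of b "a # x"] assms(3) by simp

lemma card_bool_lists_split:
  fixes A :: "bool list set"
  assumes "finite A" "[] \<notin> A"
  shows "card A = card {z. a # z \<in> A} + card {z. (\<not> a) # z \<in> A}"
proof -
  have fin: "finite {z. c # z \<in> A}" for c
    using finite_vimageI[OF assms(1), of "Cons c"] by (simp add: vimage_def)
  have "A = Cons a ` {z. a # z \<in> A} \<union> Cons (\<not> a) ` {z. (\<not> a) # z \<in> A}"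
  proof (intro equalityI subsetI)
    fix w assume "w \<in> A"
    moreover obtain c z where "w = c # z"
      using \<open>w \<in> A\<close> assms(2) by (cases w) auto
    ultimately show "w \<in> Cons a ` {z. a # z \<in> A} \<union> Cons (\<not> a) ` {z. (\<not> a) # z \<in> A}"
      by (cases "c = a") auto
  qed auto
  moreover have "card (Cons a ` {z. a # z \<in> A} \<union> Cons (\<not> a) ` {z. (\<not> a) # z \<in> A})
      = card (Cons a ` {z. a # z \<in> A}) + card (Cons (\<not> a) ` {z. (\<not> a) # z \<in> A})"
    by (rule card_Un_disjoint) (auto simp: fin)
  ultimately show ?thesis
    by (simp add: card_image)
qed

lemma card_burst_dels_Cons:
  fixes x :: "bool list"
  assumes "0 < b" "b * t \<le> length x"
  shows "card (burst_dels b t (a # x)) = card (burst_dels b t x) + card (head_dels b (\<not> a) t (a # x))"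
proof -
  have "[] \<notin> burst_dels b t (a # x)"
    using length_burst_dels assms(2) by fastforce
  from card_bool_lists_split[OF finite_burst_dels this, of a]
  have "card (burst_dels b t (a # x)) = card (head_dels b a t (a # x)) + card (head_dels b (\<not> a) t (a # x))"
    by (simp add: head_dels_def)
  with assms(1) show ?thesis
    by (simp add: head_dels_same)
qed

lemma card_inter_burst_dels_split:
  fixes x y :: "bool list"
  assumes "b * t < length x"
  shows "card (burst_dels b t x \<inter> burst_dels b t y) =
    card (head_dels b a t x \<inter> head_dels b a t y) + card (head_dels b (\<not> a) t x \<inter> head_dels b (\<not> a) t y)"
proof -
  have "[] \<notin> burst_dels b t x \<inter> burst_dels b t y"
    using length_burst_dels assms by fastforce
  from card_bool_lists_split[OF _ this, of a] show ?thesis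
    by (simp add: finite_burst_dels head_dels_def Collect_conj_eq)
qed

lemma card_inter_burst_dels_Cons_same:
  fixes x y :: "bool list"
  assumes "0 < b" "b * t \<le> length x"
  shows "card (burst_dels b t (a # x) \<inter> burst_dels b t (a # y)) =
    card (burst_dels b t x \<inter> burst_dels b t y)
    + card (head_dels b (\<not> a) t (a # x) \<inter> head_dels b (\<not> a) t (a # y))"
  using card_inter_burst_dels_split[of b t "a # x" "a # y" a] assms by (simp add: head_dels_same)

section \<open>Partial sums of binomial coefficients\<close>

text \<open>\<open>binom_sum m (t + 1)\<close> is the paper's \<open>D\<^sub>2\<^sub>,\<^sub>b(m + b t, t)\<close>; summing over \<open>i < k\<close>
  rather than \<open>i \<le> t\<close> gives the value \<open>0\<close> at \<open>k = 0\<close>, as needed for \<open>t - 1\<close> with \<open>t = 0\<close>.\<close>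

definition binom_sum :: "nat \<Rightarrow> nat \<Rightarrow> nat" where
  "binom_sum m k = (\<Sum>i<k. m choose i)"

lemma binom_sum_0 [simp]: "binom_sum m 0 = 0"
  by (simp add: binom_sum_def)

lemma binom_sum_Suc: "binom_sum m (Suc k) = binom_sum m k + (m choose k)"
  by (simp add: binom_sum_def)

lemma binom_sum_zero_Suc [simp]: "binom_sum 0 (Suc k) = 1"
  by (induction k) (simp_all add: binom_sum_Suc)

lemma binom_sum_one [simp]: "binom_sum m (Suc 0) = 1"
  by (simp add: binom_sum_def)

lemma binom_sum_Suc_Suc: "binom_sum (Suc m) (Suc k) = binom_sum m (Suc k) + binom_sum m k"
proof (induction k)
  case (Suc k)
  then show ?case
    by (simp add: binom_sum_Suc[of "Suc m" "Suc k"] binom_sum_Suc[of m "Suc k"] binom_sum_Suc[of m k])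
qed (simp add: binom_sum_def)

lemma binom_sum_Suc_Suc_Suc:
  "binom_sum (Suc m) (Suc (Suc k)) = (Suc m choose Suc k) + binom_sum m (Suc k) + binom_sum m k"
  by (simp add: binom_sum_Suc_Suc binom_sum_Suc[of m "Suc k"] binom_sum_Suc[of m k])

lemma binom_sum_add_two: "binom_sum m (Suc (Suc k)) = (Suc m choose Suc k) + binom_sum m k"
  by (simp add: binom_sum_Suc)

section \<open>The maximal number of burst-deletion results\<close>

lemma card_burst_dels_le:
  fixes x :: "bool list"
  assumes "0 < b" "b * t \<le> length x"
  shows "card (burst_dels b t x) \<le> binom_sum (length x - b * t) (Suc t)"
  using assms(2)
proof (induction "length x" arbitrary: x t rule: less_induct)
  case less
  show ?case
  proof (cases "b * t = length x")
    case False
    then obtain a x' where x: "x = a # x'" and le: "b * t \<le> length x'"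
      using less.prems by (cases x) auto
    show ?thesis
    proof (cases t)
      case (Suc s)
      have "card (head_dels b (\<not> a) t x) \<le> card (burst_dels b s (drop b x'))"
        using head_dels_other_subset[OF assms(1), of "\<not> a" a s x'] x Suc
        by (intro card_mono finite_burst_dels) simp_all
      also have "\<dots> \<le> binom_sum (length x' - b * t) t"
        using less.hyps[of "drop b x'" s] x Suc le by (simp add: diff_diff_left)
      finally have "card (head_dels b (\<not> a) t x) \<le> binom_sum (length x' - b * t) t" .
      moreover have "card (burst_dels b t x') \<le> binom_sum (length x' - b * t) (Suc t)"
        using less.hyps[of x' t] x le by simp
      ultimately show ?thesis
        using card_burst_dels_Cons[OF assms(1) le, of a] x le
        by (simp add: Suc_diff_le binom_sum_Suc_Suc)
    qed simp
  qed (simp add: burst_dels_full)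
qed

lemma card_head_dels_other_le:
  fixes x :: "bool list"
  assumes "0 < b" "c \<noteq> a" "b * Suc s \<le> length x"
  shows "card (head_dels b c (Suc s) (a # x)) \<le> binom_sum (length x - b * Suc s) (Suc s)"
proof -
  have "card (head_dels b c (Suc s) (a # x)) \<le> card (burst_dels b s (drop b x))"
    using head_dels_other_subset[OF assms(1,2)] by (intro card_mono finite_burst_dels)
  also have "\<dots> \<le> binom_sum (length x - b * Suc s) (Suc s)"
    using card_burst_dels_le[OF assms(1), of s "drop b x"] assms(3) by (simp add: diff_diff_left)
  finally show ?thesis .
qed

lemma card_head_dels_other_twice_le:
  fixes x :: "bool list"
  assumes "0 < b" "c \<noteq> a" "c \<noteq> (a # x) ! b" "b * Suc s \<le> length x"
  shows "card (head_dels b c (Suc s) (a # x)) \<le> binom_sum (length x - b * Suc s) s"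
proof -
  have H: "head_dels b c (Suc s) (a # x) = head_dels b c s ((a # x) ! b # drop b x)"
    using head_dels_other_Cons_nth[OF assms(1,2)] assms(4) by simp
  show ?thesis
  proof (cases s)
    case 0
    with assms(3) show ?thesis
      unfolding H by (simp add: head_dels_def)
  next
    case (Suc r)
    have "card (head_dels b c s ((a # x) ! b # drop b x)) \<le> binom_sum (length (drop b x) - b * Suc r) (Suc r)"
      using card_head_dels_other_le[OF assms(1,3), of r "drop b x"] assms(4) Suc by simp
    with Suc show ?thesis
      unfolding H by (simp add: diff_diff_left)
  qed
qed

definition antiperiodic :: "nat \<Rightarrow> bool list \<Rightarrow> bool" where
  "antiperiodic b x \<longleftrightarrow> (\<forall>k. k + b < length x \<longrightarrow> x ! (k + b) \<noteq> x ! k)"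

lemma antiperiodic_drop:
  assumes "antiperiodic b x"
  shows "antiperiodic b (drop j x)"
  unfolding antiperiodic_def
proof (intro allI impI)
  fix k assume "k + b < length (drop j x)"
  then have "x ! (j + k + b) \<noteq> x ! (j + k)"
    using assms unfolding antiperiodic_def by auto
  with \<open>k + b < length (drop j x)\<close> show "drop j x ! (k + b) \<noteq> drop j x ! k"
    by (simp add: add.assoc)
qed

lemma antiperiodic_Cons: "antiperiodic b (a # x) \<Longrightarrow> antiperiodic b x"
  using antiperiodic_drop[of b "a # x" 1] by simp

lemma antiperiodic_nth: "antiperiodic b (a # x) \<Longrightarrow> b \<le> length x \<Longrightarrow> (a # x) ! b = (\<not> a)"
  unfolding antiperiodic_def by (metis add_0 le_imp_less_Suc length_Cons nth_Cons_0)

lemma head_dels_other_antiperiodic: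
  assumes "0 < b" "antiperiodic b (a # x)" "b \<le> length x"
  shows "head_dels b (\<not> a) (Suc s) (a # x) = burst_dels b s (drop b x)"
  using head_dels_other_Cons_nth[OF assms(1) _ assms(3), where c = "\<not> a" and t = s] antiperiodic_nth[OF assms(2,3)]
  by (simp add: head_dels_same[OF assms(1)])

lemma card_burst_dels_antiperiodic:
  assumes "0 < b" "antiperiodic b x" "b * t \<le> length x"
  shows "card (burst_dels b t x) = binom_sum (length x - b * t) (Suc t)"
  using assms(2,3)
proof (induction "length x" arbitrary: x t rule: less_induct)
  case less
  show ?case
  proof (cases "b * t = length x")
    case False
    then obtain a x' where x: "x = a # x'" and le: "b * t \<le> length x'"
      using less.prems by (cases x) auto
    have x': "antiperiodic b x'"
      using antiperiodic_Cons less.prems(1) x by blast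
    show ?thesis
    proof (cases t)
      case (Suc s)
      have "card (head_dels b (\<not> a) t x) = card (burst_dels b s (drop b x'))"
        using head_dels_other_antiperiodic[OF assms(1)] less.prems(1) x Suc le by simp
      also have "\<dots> = binom_sum (length x' - b * t) t"
        using less.hyps[of "drop b x'" s] antiperiodic_drop[OF x'] x Suc le by (simp add: diff_diff_left)
      finally have "card (head_dels b (\<not> a) t x) = binom_sum (length x' - b * t) t" .
      moreover have "card (burst_dels b t x') = binom_sum (length x' - b * t) (Suc t)"
        using less.hyps[of x' t] x x' le by simp
      ultimately show ?thesis
        using card_burst_dels_Cons[OF assms(1) le, of a] x le
        by (simp add: Suc_diff_le binom_sum_Suc_Suc)
    qed simp
  qed (simp add: burst_dels_full)
qed

lemma card_head_dels_other_antiperiodic: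
  assumes "0 < b" "antiperiodic b (a # x)" "c \<noteq> a" "b * Suc s \<le> length x"
  shows "card (head_dels b c (Suc s) (a # x)) = binom_sum (length x - b * Suc s) (Suc s)"
proof -
  have "c = (\<not> a)" using assms(3) by simp
  then have "card (head_dels b c (Suc s) (a # x)) = card (burst_dels b s (drop b x))"
    using head_dels_other_antiperiodic[OF assms(1,2)] assms(4) by simp
  also have "\<dots> = binom_sum (length x - b * Suc s) (Suc s)"
    using card_burst_dels_antiperiodic[OF assms(1) antiperiodic_drop[OF antiperiodic_Cons[OF assms(2)]],
        of s b] assms(4)
    by (simp add: diff_diff_left)
  finally show ?thesis .
qed

lemma card_head_dels_other_twice_antiperiodic:
  assumes "0 < b" "antiperiodic b x" "c \<noteq> a" "c \<noteq> (a # x) ! b" "b * Suc s \<le> length x"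
  shows "card (head_dels b c (Suc s) (a # x)) = binom_sum (length x - b * Suc s) s"
proof -
  have H: "head_dels b c (Suc s) (a # x) = head_dels b c s ((a # x) ! b # drop b x)"
    using head_dels_other_Cons_nth[OF assms(1,3)] assms(5) by simp
  show ?thesis
  proof (cases s)
    case 0
    with assms(4) show ?thesis
      unfolding H by (simp add: head_dels_def)
  next
    case (Suc r)
    have "(a # x) ! b # drop b x = drop (b - 1) x"
      using assms(1,5) Cons_nth_drop_Suc[of "b - 1" x] by (cases b) auto
    then have "antiperiodic b ((a # x) ! b # drop b x)"
      using antiperiodic_drop[OF assms(2)] by metis
    from card_head_dels_other_antiperiodic[OF assms(1) this assms(4)] assms(5) Suc
    show ?thesis
      unfolding H by (simp add: diff_diff_left)
  qed
qed

definition antiperiodic_word :: "nat \<Rightarrow> nat \<Rightarrow> bool list" where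
  "antiperiodic_word b n = map (\<lambda>k. odd (k div b)) [0..<n]"

lemma length_antiperiodic_word [simp]: "length (antiperiodic_word b n) = n"
  by (simp add: antiperiodic_word_def)

lemma antiperiodic_antiperiodic_word: "0 < b \<Longrightarrow> antiperiodic b (antiperiodic_word b n)"
  by (auto simp: antiperiodic_def antiperiodic_word_def div_add_self2 simp del: upt_Suc)

lemma finite_bool_lists_length: "finite {x :: bool list. length x = n}"
  using finite_lists_length_eq[of "UNIV :: bool set" n] by simp

lemma Dmax_eq:
  assumes "0 < b" "b * t \<le> m"
  shows "Dmax b (int m) (int t) = binom_sum (m - b * t) (Suc t)"
proof (cases "b * t = m")
  case False
  define A where "A = {card (burst_dels b t x) | x :: bool list. length x = m}"
  have "finite A"
    unfolding A_def using finite_bool_lists_length by (simp add: setcompr_eq_image)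
  moreover have "k \<le> binom_sum (m - b * t) (Suc t)" if "k \<in> A" for k
    using that card_burst_dels_le[OF assms(1)] assms(2) by (auto simp: A_def)
  moreover have "card (burst_dels b t (antiperiodic_word b m)) = binom_sum (m - b * t) (Suc t)"
    using card_burst_dels_antiperiodic[OF assms(1) antiperiodic_antiperiodic_word[OF assms(1)]] assms(2)
    by simp
  then have "binom_sum (m - b * t) (Suc t) \<in> A"
    unfolding A_def mem_Collect_eq by (intro exI[of _ "antiperiodic_word b m"]) simp
  ultimately have "Max A = binom_sum (m - b * t) (Suc t)"
    by (rule Max_eqI)
  moreover have "\<not> int m < int b * int t" "int m \<noteq> int b * int t"
    using assms(2) False by (simp_all flip: of_nat_mult)
  ultimately show ?thesis
    by (simp add: Dmax_def A_def)
qed (simp add: Dmax_def flip: of_nat_mult)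

section \<open>Upper bound on the intersection\<close>

lemma burst_dels_inter_full:
  "b * t = length x \<Longrightarrow> length y = length x \<Longrightarrow> burst_dels b t x \<inter> burst_dels b t y = {[]}"
  by (simp add: burst_dels_full)

lemma card_inter_burst_dels_Cons_other_le:
  fixes x y :: "bool list"
  assumes "2 \<le> b" "a \<noteq> c" "length x = length y" "b * Suc s + b \<le> length (a # x)"
  shows "card (burst_dels b (Suc s) (a # x) \<inter> burst_dels b (Suc s) (c # y))
      + (length (a # x) - b * Suc s + 1 - b choose Suc s)
    \<le> binom_sum (length (a # x) - b * Suc s) (Suc (Suc s))"
proof -
  define M where "M = length x - b * Suc s"
  have b: "0 < b" using assms(1) by simp
  have le: "b * Suc s \<le> length x" and n: "length (a # x) - b * Suc s = Suc M"
    using assms(4) b by (auto simp: M_def)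
  have "card (head_dels b a (Suc s) (a # x) \<inter> head_dels b a (Suc s) (c # y)) \<le> binom_sum M (Suc s)"
    using order.trans[OF card_mono[OF finite_head_dels Int_lower2] card_head_dels_other_le[OF b assms(2)]]
      assms(3) le by (simp add: M_def)
  moreover have "card (head_dels b (\<not> a) (Suc s) (a # x) \<inter> head_dels b (\<not> a) (Suc s) (c # y))
      \<le> binom_sum M (Suc s)"
    using order.trans[OF card_mono[OF finite_head_dels Int_lower1] card_head_dels_other_le[OF b]]
      le by (simp add: M_def)
  moreover have "(Suc M + 1 - b choose Suc s) \<le> (M choose Suc s)"
    using assms(1) by (intro binomial_right_mono) simp
  moreover have "binom_sum (Suc M) (Suc (Suc s)) = 2 * binom_sum M (Suc s) + (M choose Suc s)"
    using binom_sum_Suc_Suc[of M "Suc s"] binom_sum_Suc[of M "Suc s"] by simp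
  moreover have "b * Suc s < length (a # x)"
    using le by simp
  ultimately show ?thesis
    unfolding n card_inter_burst_dels_split[OF \<open>b * Suc s < length (a # x)\<close>, of "c # y" a]
    by linarith
qed

lemma card_inter_burst_dels_Cons_other_agree_le:
  fixes x y :: "bool list"
  assumes "0 < b" "a \<noteq> c" "length x = length y" "b * Suc s \<le> length x"
    and "(a # x) ! b = (c # y) ! b"
  shows "card (burst_dels b (Suc s) (a # x) \<inter> burst_dels b (Suc s) (c # y))
      + (length (a # x) - b * Suc s choose Suc s)
    \<le> binom_sum (length (a # x) - b * Suc s) (Suc (Suc s))"
proof -
  define M where "M = length x - b * Suc s"
  have c: "c = (\<not> a)" using assms(2) by simp
  have "card (head_dels b a (Suc s) (c # y)) + card (head_dels b c (Suc s) (a # x))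
      \<le> binom_sum M (Suc s) + binom_sum M s"
  proof (cases "(a # x) ! b = a")
    case True
    then show ?thesis
      using card_head_dels_other_le[OF assms(1,2), of s y] card_head_dels_other_twice_le[OF assms(1), of c a x s]
        assms c by (simp add: M_def)
  next
    case False
    then show ?thesis
      using card_head_dels_other_le[OF assms(1), of c a s x] card_head_dels_other_twice_le[OF assms(1,2), of y s]
        assms c by (simp add: M_def)
  qed
  moreover have "card (head_dels b a (Suc s) (a # x) \<inter> head_dels b a (Suc s) (c # y))
      \<le> card (head_dels b a (Suc s) (c # y))"
    by (rule card_mono[OF finite_head_dels Int_lower2])
  moreover have "card (head_dels b c (Suc s) (a # x) \<inter> head_dels b c (Suc s) (c # y))
      \<le> card (head_dels b c (Suc s) (a # x))"
    by (rule card_mono[OF finite_head_dels Int_lower1])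
  moreover have "length (a # x) - b * Suc s = Suc M"
    using assms(4) by (simp add: M_def)
  ultimately show ?thesis
    using card_inter_burst_dels_split[of b "Suc s" "a # x" "c # y" a] assms(4) c
    by (simp add: binom_sum_Suc_Suc_Suc)
qed

lemma card_inter_head_dels_other_twice_le:
  fixes x y :: "bool list"
  assumes "0 < b" "c \<noteq> a" "length x = length y" "b * Suc s \<le> length x"
    and "(a # x) ! b \<noteq> (a # y) ! b"
  shows "card (head_dels b c (Suc s) (a # x) \<inter> head_dels b c (Suc s) (a # y))
    \<le> binom_sum (length x - b * Suc s) s"
proof (cases "(a # x) ! b = c")
  case True
  then have "c \<noteq> (a # y) ! b" using assms(5) by simp
  from card_head_dels_other_twice_le[OF assms(1,2) this] assms(3,4)
  have "card (head_dels b c (Suc s) (a # y)) \<le> binom_sum (length x - b * Suc s) s" by simp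
  with card_mono[OF finite_head_dels Int_lower2] show ?thesis
    by (rule order.trans)
next
  case False
  then have "c \<noteq> (a # x) ! b" by simp
  from card_head_dels_other_twice_le[OF assms(1,2) this assms(4)]
  have "card (head_dels b c (Suc s) (a # x)) \<le> binom_sum (length x - b * Suc s) s" .
  with card_mono[OF finite_head_dels Int_lower1] show ?thesis
    by (rule order.trans)
qed

text \<open>The induction step of \<open>card_inter_burst_dels_le\<close> for words with a common first symbol:
  the hypotheses are its instances for the tails and for the tails shortened by \<open>b\<close> more symbols.\<close>

lemma card_inter_burst_dels_Cons_same_le:
  fixes x y :: "bool list"
  assumes "0 < b" "length x = length y" "b * Suc s + b \<le> length (a # x)"
    and "drop b (a # x) \<noteq> drop b (a # y)"
    and tails: "card (burst_dels b (Suc s) x \<inter> burst_dels b (Suc s) y)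
        + (length x - b * Suc s + 1 - b choose Suc s) \<le> binom_sum (length x - b * Suc s) (Suc (Suc s))"
    and drops: "drop b x \<noteq> drop b y \<Longrightarrow> card (burst_dels b s (drop b x) \<inter> burst_dels b s (drop b y))
        + (length x - b * Suc s + 1 - b choose s) \<le> binom_sum (length x - b * Suc s) (Suc s)"
  shows "card (burst_dels b (Suc s) (a # x) \<inter> burst_dels b (Suc s) (a # y))
      + (length (a # x) - b * Suc s + 1 - b choose Suc s)
    \<le> binom_sum (length (a # x) - b * Suc s) (Suc (Suc s))"
proof -
  define M where "M = length x - b * Suc s"
  have le: "b * Suc s \<le> length x" and "b \<le> M + 1"
    using assms(1,3) by (auto simp: M_def)
  then have n: "length (a # x) - b * Suc s = Suc M" and C: "Suc M + 1 - b = Suc (M + 1 - b)"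
    by (auto simp: M_def)
  have "card (head_dels b (\<not> a) (Suc s) (a # x) \<inter> head_dels b (\<not> a) (Suc s) (a # y))
      + (M + 1 - b choose s) \<le> binom_sum M (Suc s)"
  proof (cases "drop b x = drop b y")
    case True
    have "b < length (a # x)" "b < length (a # y)"
      using le assms(2) by auto
    then have "drop b (a # x) = (a # x) ! b # drop b x" "drop b (a # y) = (a # y) ! b # drop b y"
      by (metis Cons_nth_drop_Suc drop_Suc_Cons)+
    with True assms(4) have "(a # x) ! b \<noteq> (a # y) ! b"
      by auto
    then have "card (head_dels b (\<not> a) (Suc s) (a # x) \<inter> head_dels b (\<not> a) (Suc s) (a # y))
        \<le> binom_sum M s"
      using card_inter_head_dels_other_twice_le[OF assms(1) _ assms(2) le] by (simp add: M_def)
    moreover have "(M + 1 - b choose s) \<le> (M choose s)"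
      using assms(1) by (intro binomial_right_mono) simp
    ultimately show ?thesis
      by (simp add: binom_sum_Suc)
  next
    case False
    have "card (head_dels b (\<not> a) (Suc s) (a # x) \<inter> head_dels b (\<not> a) (Suc s) (a # y))
        \<le> card (burst_dels b s (drop b x) \<inter> burst_dels b s (drop b y))"
      using head_dels_other_subset[OF assms(1), of "\<not> a" a s] by (intro card_mono) (auto simp: finite_burst_dels)
    with drops[OF False] show ?thesis
      by (simp add: M_def)
  qed
  with tails show ?thesis
    unfolding n C card_inter_burst_dels_Cons_same[OF assms(1) le] by (simp add: M_def binom_sum_Suc_Suc)
qed

lemma card_inter_burst_dels_prefix_le:
  fixes x y :: "bool list"
  assumes "0 < b" "j \<le> b" "length x = length y" "x \<noteq> y" "drop j x = drop j y" "b * t \<le> length x"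
  shows "card (burst_dels b t x \<inter> burst_dels b t y) + (length x - b * t + 1 - j choose t)
    \<le> binom_sum (length x - b * t) (Suc t)"
  using assms(2-6)
proof (induction x arbitrary: y j)
  case (Cons a x)
  obtain c y' where y: "y = c # y'"
    using Cons.prems(2) by (cases y) auto
  have "j \<noteq> 0"
    using Cons.prems(3,4) by (metis drop_0)
  consider "t = 0" | "t \<noteq> 0" "b * t = length (a # x)" | s where "t = Suc s" "b * t \<le> length x"
    using Cons.prems(5) by (cases t) (auto simp: le_Suc_eq)
  then show ?case
  proof cases
    case 2
    then show ?thesis
      using burst_dels_inter_full[of b t "a # x" y] Cons.prems(2) \<open>j \<noteq> 0\<close> by (simp add: binomial_eq_0)
  next
    case (3 s)
    show ?thesis
    proof (cases "a = c")
      case True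
      obtain j' where j: "j = Suc j'"
        using \<open>j \<noteq> 0\<close> by (cases j) auto
      have "card (burst_dels b t x \<inter> burst_dels b t y') + (length x - b * t + 1 - j' choose t)
          \<le> binom_sum (length x - b * t) (Suc t)"
        using Cons.IH[of j' y'] Cons.prems True y j 3 by simp
      moreover have "card (head_dels b (\<not> a) t (a # x) \<inter> head_dels b (\<not> a) t (a # y'))
          \<le> binom_sum (length x - b * t) t"
        using order.trans[OF card_mono[OF finite_head_dels Int_lower1] card_head_dels_other_le[OF assms(1)]] 3
        by simp
      ultimately show ?thesis
        using card_inter_burst_dels_Cons_same[OF assms(1) 3(2), of a y'] True y j 3
        by (simp add: Suc_diff_le binom_sum_Suc_Suc)
    next
      case False
      have "b \<le> length x"
        using 3 by (simp add: order.trans)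
      then have "(a # x) ! b = drop j (a # x) ! (b - j)"
        using Cons.prems(1) by simp
      also have "\<dots> = y ! b"
        using Cons.prems(1,2,4) \<open>b \<le> length x\<close> by simp
      finally have "(a # x) ! b = (c # y') ! b"
        using y by simp
      from card_inter_burst_dels_Cons_other_agree_le[OF assms(1) False _ _ this] Cons.prems(2) y 3
      have "card (burst_dels b t (a # x) \<inter> burst_dels b t y) + (length (a # x) - b * t choose t)
          \<le> binom_sum (length (a # x) - b * t) (Suc t)"
        by simp
      moreover have "(length (a # x) - b * t + 1 - j choose t) \<le> (length (a # x) - b * t choose t)"
        using \<open>j \<noteq> 0\<close> by (intro binomial_right_mono) simp
      ultimately show ?thesis
        by linarith
    qed
  qed (use Cons.prems(3) in simp)
qed simp

lemma card_inter_burst_dels_le: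
  fixes x y :: "bool list"
  assumes "2 \<le> b" "length x = length y" "x \<noteq> y" "b * t + b \<le> length x + 1"
  shows "card (burst_dels b t x \<inter> burst_dels b t y) + (length x - b * t + 1 - b choose t)
    \<le> binom_sum (length x - b * t) (Suc t)"
  using assms(2-4)
proof (induction "length x" arbitrary: x y t rule: less_induct)
  case less
  have b: "0 < b" using assms(1) by simp
  have le: "b * t \<le> length x" using less.prems(3) b by simp
  consider (zero) "t = 0" | (tail) "drop b x = drop b y" | (short) "t \<noteq> 0" "length x + 1 = b * t + b"
    | (step) "t \<noteq> 0" "drop b x \<noteq> drop b y" "b * t + b \<le> length x"
    using less.prems(3) by (cases "drop b x = drop b y"; cases "t = 0") (auto simp: le_Suc_eq)
  then show ?case
  proof cases
    case tail
    then show ?thesis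
      using card_inter_burst_dels_prefix_le[OF b le_refl less.prems(1,2) tail le] by simp
  next
    case short
    then have "length x - b * t + 1 - b = 0"
      using b by arith
    with short show ?thesis
      using order.trans[OF card_mono[OF finite_burst_dels Int_lower1] card_burst_dels_le[OF b le]]
      by (simp add: binomial_eq_0)
  next
    case step
    then obtain s a x' c y' where t: "t = Suc s" and x: "x = a # x'" and y: "y = c # y'"
      using less.prems(1) b by (cases t; cases x; cases y) auto
    have lens: "length x' = length y'"
      using less.prems(1) x y by simp
    show ?thesis
    proof (cases "a = c")
      case False
      then show ?thesis
        using card_inter_burst_dels_Cons_other_le[OF assms(1) False lens] step t x y by simp
    next
      case True
      have "card (burst_dels b t x' \<inter> burst_dels b t y') + (length x' - b * t + 1 - b choose t)
          \<le> binom_sum (length x' - b * t) (Suc t)"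
        using less.hyps[of x' y' t] less.prems step x y lens True by simp
      moreover have "card (burst_dels b s (drop b x') \<inter> burst_dels b s (drop b y'))
          + (length x' - b * t + 1 - b choose s) \<le> binom_sum (length x' - b * t) t"
        if "drop b x' \<noteq> drop b y'"
        using less.hyps[of "drop b x'" "drop b y'" s] step x y t lens that b
        by (simp add: diff_diff_left algebra_simps)
      ultimately show ?thesis
        using card_inter_burst_dels_Cons_same_le[OF b lens, of s a] step x y t True by simp
    qed
  qed (use less.prems(2) in simp)
qed

section \<open>Pairs attaining the bound\<close>

lemma card_inter_burst_dels_flip_head:
  assumes "0 < b" "antiperiodic b (a # x)" "b * Suc s \<le> length x"
  shows "card (burst_dels b (Suc s) (a # x) \<inter> burst_dels b (Suc s) ((\<not> a) # x))
    = binom_sum (length x - b * Suc s) (Suc s) + binom_sum (length x - b * Suc s) s"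
proof -
  have x: "antiperiodic b x"
    using antiperiodic_Cons[OF assms(2)] .
  have "head_dels b a (Suc s) (a # x) \<inter> head_dels b a (Suc s) ((\<not> a) # x) = head_dels b a (Suc s) ((\<not> a) # x)"
    using head_dels_subset[OF assms(1), of a "Suc s" "(\<not> a) # x"] by (auto simp: head_dels_same[OF assms(1)])
  moreover have "head_dels b (\<not> a) (Suc s) (a # x) \<inter> head_dels b (\<not> a) (Suc s) ((\<not> a) # x)
      = head_dels b (\<not> a) (Suc s) (a # x)"
    using head_dels_subset[OF assms(1), of "\<not> a" "Suc s" "a # x"] head_dels_same[OF assms(1), of "\<not> a"]
    by auto
  moreover have "((\<not> a) # x) ! b = (\<not> a)"
    using antiperiodic_nth[OF assms(2)] assms(1,3) by (cases b) auto
  then have "card (head_dels b a (Suc s) ((\<not> a) # x)) = binom_sum (length x - b * Suc s) s"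
    using card_head_dels_other_twice_antiperiodic[OF assms(1) x, of a "\<not> a" s] assms(3) by simp
  moreover have "card (head_dels b (\<not> a) (Suc s) (a # x)) = binom_sum (length x - b * Suc s) (Suc s)"
    using card_head_dels_other_antiperiodic[OF assms(1,2)] assms(3) by simp
  ultimately show ?thesis
    using card_inter_burst_dels_split[of b "Suc s" "a # x" "(\<not> a) # x" a] assms(3) by simp
qed

lemma head_dels_other_update:
  assumes "0 < b" "c \<noteq> a" "Suc p < b"
  shows "head_dels b c (Suc t) (a # x[p := d]) = head_dels b c (Suc t) (a # x)"
proof -
  have "drop b (a # x[p := d]) = drop b (a # x)"
    using assms(1,3) by (cases b) simp_all
  then show ?thesis
    using head_dels_other[OF assms(1,2)] by metis
qed

lemma card_inter_burst_dels_flip: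
  assumes "0 < b" "antiperiodic b x" "p < b" "p < length x" "b * t + p \<le> length x"
  shows "card (burst_dels b t x \<inter> burst_dels b t (x[p := \<not> x ! p])) + (length x - b * t - p choose t)
    = binom_sum (length x - b * t) (Suc t)"
  using assms(2-5)
proof (induction x arbitrary: p)
  case (Cons a x)
  consider "t = 0" | "t \<noteq> 0" "b * t = length (a # x)" | s where "t = Suc s" "b * t \<le> length x"
    using Cons.prems(4) by (cases t; cases "b * t = length (a # x)") auto
  then show ?case
  proof cases
    case 1
    have "(a # x)[p := \<not> (a # x) ! p] \<noteq> a # x"
      using Cons.prems(3) by (metis nth_list_update_eq)
    with 1 show ?thesis by simp
  next
    case 2
    then show ?thesis
      using burst_dels_inter_full[of b t "a # x" "(a # x)[p := \<not> (a # x) ! p]"] Cons.prems(4)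
      by (simp add: binomial_eq_0)
  next
    case (3 s)
    define M where "M = length x - b * t"
    have n: "length (a # x) - b * t = Suc M"
      using 3 by (simp add: M_def)
    show ?thesis
    proof (cases p)
      case 0
      then show ?thesis
        using card_inter_burst_dels_flip_head[OF assms(1) Cons.prems(1), of s] n 3
        by (simp add: M_def binom_sum_Suc_Suc_Suc)
    next
      case (Suc p')
      have "card (head_dels b (\<not> a) t (a # x) \<inter> head_dels b (\<not> a) t (a # x[p' := \<not> x ! p']))
          = binom_sum M t"
        using card_head_dels_other_antiperiodic[OF assms(1) Cons.prems(1), of "\<not> a" s]
          head_dels_other_update[OF assms(1), of "\<not> a" a p' s x] Cons.prems(2) Suc 3
        by (simp add: M_def)
      moreover have "card (burst_dels b t x \<inter> burst_dels b t (x[p' := \<not> x ! p'])) + (M - p' choose t)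
          = binom_sum M (Suc t)"
        using Cons.IH[of p'] antiperiodic_Cons[OF Cons.prems(1)] Cons.prems Suc
        by (simp add: M_def diff_diff_left)
      ultimately show ?thesis
        using card_inter_burst_dels_Cons_same[OF assms(1) 3(2), of a "x[p' := \<not> x ! p']"] n Suc
        by (simp add: binom_sum_Suc_Suc)
    qed
  qed
qed simp

lemma exists_pair_card_inter_burst_dels_eq:
  assumes "0 < b" "1 \<le> t" "b * t + b \<le> n + 1"
  shows "\<exists>x y :: bool list. length x = n \<and> length y = n \<and> x \<noteq> y \<and>
    card (burst_dels b t x \<inter> burst_dels b t y) + (n - b * t + 1 - b choose t) = binom_sum (n - b * t) (Suc t)"
proof -
  define u where "u = antiperiodic_word b n"
  define v where "v = u[b - 1 := \<not> u ! (b - 1)]"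
  have "b \<le> b * t"
    using assms(2) by simp
  then have le: "b * t + (b - 1) \<le> n" "b - 1 < n" and C: "n - b * t - (b - 1) = n - b * t + 1 - b"
    using assms(1,3) by arith+
  then have "v ! (b - 1) \<noteq> u ! (b - 1)"
    by (simp add: u_def v_def)
  then have "u \<noteq> v" by auto
  moreover have "card (burst_dels b t u \<inter> burst_dels b t v) + (n - b * t + 1 - b choose t)
      = binom_sum (n - b * t) (Suc t)"
    using card_inter_burst_dels_flip[OF assms(1) antiperiodic_antiperiodic_word[OF assms(1)], of "b - 1" n t]
      assms(1) le unfolding C by (simp add: u_def v_def)
  moreover have "length u = n" "length v = n"
    by (simp_all add: u_def v_def)
  ultimately show ?thesis
    by blast
qed

lemma Nminus_eq:
  assumes "2 \<le> b" "1 \<le> t" "b * t + b \<le> n + 1"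
  shows "Nminus b n t + (n - b * t + 1 - b choose t) = binom_sum (n - b * t) (Suc t)"
proof -
  define C where "C = (n - b * t + 1 - b choose t)"
  define P where "P = {(x :: bool list, y). length x = n \<and> length y = n \<and> x \<noteq> y}"
  define A where "A = (\<lambda>(x, y). card (burst_dels b t x \<inter> burst_dels b t y)) ` P"
  have "finite P"
    by (rule finite_subset[OF _ finite_cartesian_product[OF finite_bool_lists_length[of n] finite_bool_lists_length[of n]]])
      (auto simp: P_def)
  then have "finite A"
    unfolding A_def by simp
  moreover have "k \<le> binom_sum (n - b * t) (Suc t) - C" if "k \<in> A" for k
  proof -
    obtain x y where "k = card (burst_dels b t x \<inter> burst_dels b t y)" "(x, y) \<in> P"
      using \<open>k \<in> A\<close> by (auto simp: A_def)
    with card_inter_burst_dels_le[OF assms(1), of x y t] assms(3) show ?thesis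
      by (simp add: P_def C_def)
  qed
  moreover obtain x y where "(x, y) \<in> P"
    and xy: "card (burst_dels b t x \<inter> burst_dels b t y) + C = binom_sum (n - b * t) (Suc t)"
    using exists_pair_card_inter_burst_dels_eq[OF _ assms(2,3)] assms(1) by (auto simp: P_def C_def)
  then have "binom_sum (n - b * t) (Suc t) - C \<in> A"
    unfolding A_def by (force simp: xy[symmetric])
  ultimately have "Max A = binom_sum (n - b * t) (Suc t) - C"
    by (rule Max_eqI)
  moreover have "Nminus b n t = Max A"
    unfolding Nminus_def A_def P_def by (rule arg_cong[where f = Max]) auto
  ultimately show ?thesis
    using xy by (simp add: C_def)
qed

lemma Dmax_minus_three_b:
  assumes "0 < b" "b * Suc s + b \<le> n"
  shows "Dmax b (int n - 3 * int b) (int (Suc s) - 2) = binom_sum (n - b - b * Suc s) s"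
proof (cases s)
  case (Suc r)
  have "b * Suc s = 2 * b + b * r"
    using Suc by simp
  then have "3 * b \<le> n" "b * r \<le> n - 3 * b" "n - 3 * b - b * r = n - b - b * Suc s"
    using assms(2) by arith+
  moreover have "int n - 3 * int b = int (n - 3 * b)"
    using \<open>3 * b \<le> n\<close> by (simp add: of_nat_diff)
  moreover have "int (Suc s) - 2 = int r"
    using Suc by simp
  ultimately show ?thesis
    using Dmax_eq[OF assms(1), of r "n - 3 * b"] Suc by (simp only:)
qed (simp add: Dmax_def)

lemma Dmax_shift_diff:
  assumes "0 < b" "1 \<le> t" "(t + 1) * b \<le> n + 1"
  shows "int (Dmax b (int n - int b) (int t)) - int (Dmax b (int n - 3 * int b) (int t - 2))
    = int (n + 1 - (t + 1) * b choose t)"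
proof (cases "(t + 1) * b = n + 1")
  case True
  then have "int ((t + 1) * b) = int (n + 1)"
    by (simp only:)
  then have "int n + 1 = int b * int t + int b"
    unfolding of_nat_mult of_nat_add of_nat_1 by (simp add: algebra_simps)
  moreover have "int b * (int t - 2) = int b * int t - 2 * int b"
    by (simp add: algebra_simps)
  ultimately have "int n - int b < int b * int t" "int n - 3 * int b < int b * (int t - 2)"
    using assms(1) by linarith+
  then have "Dmax b (int n - int b) (int t) = 0" "Dmax b (int n - 3 * int b) (int t - 2) = 0"
    unfolding Dmax_def by simp_all
  moreover have "n + 1 - (t + 1) * b = 0"
    using True by simp
  ultimately show ?thesis
    using assms(2) by (simp add: binomial_eq_0)
next
  case False
  obtain s where t: "t = Suc s"
    using assms(2) by (cases t) auto
  have tb: "(t + 1) * b = b * t + b"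
    by (simp add: algebra_simps)
  define K where "K = n - b - b * t"
  have le: "b * t + b \<le> n"
    using assms(3) False unfolding tb by simp
  then have n_b: "int n - int b = int (n - b)" and "b * t \<le> n - b"
    by (simp_all add: of_nat_diff)
  have "Dmax b (int n - int b) (int t) = binom_sum K (Suc t)"
    unfolding n_b K_def using \<open>b * t \<le> n - b\<close> by (rule Dmax_eq[OF assms(1)])
  moreover have "Dmax b (int n - 3 * int b) (int t - 2) = binom_sum K s"
    using Dmax_minus_three_b[OF assms(1), of s n] le t by (simp add: K_def)
  moreover have "n + 1 - (t + 1) * b = Suc K"
    using le unfolding tb K_def by simp
  ultimately show ?thesis
    using binom_sum_add_two[of K s] t by simp
qed

theorem theorem4p10:
  fixes b t n :: nat
  assumes "b \<ge> 2" and "t \<ge> 1" and "n + 1 \<ge> (t + 1) * b"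
  shows "int (Nminus b n t) = int (Dmax b (int n) (int t)) - int (Dmax b (int n - int b) (int t))
           + int (Dmax b (int n - 3 * int b) (int t - 2))
       \<and> int (Nminus b n t) = int (Dmax b (int n) (int t)) - int ((n + 1 - (t + 1) * b) choose t)
       \<and> Dmax b (int n) (int t) = (\<Sum>i = 0..t. (n - b * t) choose i)"
proof -
  have b: "0 < b" using assms(1) by simp
  have tb: "(t + 1) * b = b * t + b"
    by (simp add: algebra_simps)
  have le: "b * t + b \<le> n + 1" "n - b * t + 1 - b = n + 1 - (t + 1) * b"
    using assms(3) b unfolding tb by arith+
  have D: "Dmax b (int n) (int t) = binom_sum (n - b * t) (Suc t)"
    using Dmax_eq[OF b] le(1) b by simp
  have N: "Nminus b n t + (n + 1 - (t + 1) * b choose t) = Dmax b (int n) (int t)"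
    using Nminus_eq[OF assms(1,2) le(1)] unfolding D le(2) .
  have "binom_sum (n - b * t) (Suc t) = (\<Sum>i = 0..t. (n - b * t) choose i)"
    by (simp add: binom_sum_def atLeast0AtMost lessThan_Suc_atMost)
  with N Dmax_shift_diff[OF b assms(2,3)] D show ?thesis
    by linarith
qed

end
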